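(* For every $n\ge1$, \[ \ell^\ast(\mathcal{B}_{(2,n)};z)=z(1+z)^{n-1}=\sum_{\substack{0<b<2^n\\ b \text{ odd}}} z^{\operatorname{supp}_2(b)}, \] where $\operatorname{supp}_2(b)$ is the number of $1$'s in the binary representation of $b$.
   Context: $\mathcal{B}_{(2,n)}:=\operatorname{conv}\bigl(e^{(1)},\ldots,e^{(n)},-\sum_{i=1}^n2^{i-1}e^{(i)}\bigr)\subset\mathbb{R}^n$, where $e^{(i)}$ are standard basis vectors. For a lattice simplex $\Delta=\operatorname{conv}(v^{(0)},\ldots,v^{(d)})\subset\mathbb{R}^n$, $\ell^\ast(\Delta;z):=\sum_{x\in\Pi^\circ_\Delta\cap\mathbb{Z}^{n+1}}z^{x_{n+1}}$, where $\Pi^\circ_\Delta:=\{\sum_{i=0}^d\lambda_i(v^{(i)},1):0<\lambda_i<1\}$. *)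

theory Defs
  imports "HOL-Computational_Algebra.Polynomial"
begin

text \<open>Points of \<open>\<int>^(n+1)\<close> / \<open>\<real>^n\<close> are represented as functions \<open>nat \<Rightarrow> int\<close>
  whose coordinates are indexed by \<open>0..n\<close> (resp. \<open>0..n-1\<close>).
  A lattice simplex \<open>conv(v 0, ..., v d)\<subseteq>\<real>^n\<close> is given by its vertex family
  \<open>v :: nat \<Rightarrow> nat \<Rightarrow> int\<close>, where \<open>v i j\<close> is the j-th coordinate (j < n) of the i-th vertex.\<close>

definition open_par_lattice :: "nat \<Rightarrow> nat \<Rightarrow> (nat \<Rightarrow> nat \<Rightarrow> int) \<Rightarrow> (nat \<Rightarrow> int) set" where
  "open_par_lattice n d v =
     {x. (\<forall>j>n. x j = 0) \<and>
         (\<exists>l :: nat \<Rightarrow> real. (\<forall>i\<le>d. 0 < l i \<and> l i < 1) \<and>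
             (\<forall>j<n. real_of_int (x j) = (\<Sum>i\<le>d. l i * real_of_int (v i j))) \<and>
             real_of_int (x n) = (\<Sum>i\<le>d. l i))}"

text \<open>\<open>\<ell>\<^sup>*(\<Delta>;z)\<close> as a polynomial in z: sum of \<open>z^(x_{n+1})\<close> over lattice points of the open
  fundamental parallelepiped (the last coordinate is index n here).\<close>
definition lstar :: "nat \<Rightarrow> nat \<Rightarrow> (nat \<Rightarrow> nat \<Rightarrow> int) \<Rightarrow> int poly" where
  "lstar n d v = (\<Sum>x\<in>open_par_lattice n d v. monom 1 (nat (x n)))"

text \<open>Vertices of \<open>\<B>_(2,n)\<close>: vertex 0 is \<open>-\<Sum> 2^(i-1) e^(i)\<close>, vertex i (1 \<le> i \<le> n) is \<open>e^(i)\<close>,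
  whose nonzero coordinate has index i-1.\<close>
definition B2_vertices :: "nat \<Rightarrow> nat \<Rightarrow> int" where
  "B2_vertices i j = (if i = 0 then - (2 ^ j) else if j = i - 1 then 1 else 0)"

fun supp2 :: "nat \<Rightarrow> nat" where
  "supp2 b = (if b = 0 then 0 else b mod 2 + supp2 (b div 2))"

declare supp2.simps[simp del]

end

theory Submission
  imports Defs
begin

text \<open>Write \<open>t\<close> for the barycentric coordinate \<open>\<lambda>\<^sub>0\<close>. The coordinate equations
  \<open>x\<^sub>j = \<lambda>\<^sub>j\<^sub>+\<^sub>1 - 2^j t\<close> force \<open>\<lambda>\<^sub>j\<^sub>+\<^sub>1\<close> to be the fractional part of \<open>2^j t\<close>, and the last
  coordinate gives \<open>2^n t \<in> \<int>\<close>. Hence \<open>t = k / 2^n\<close> with \<open>0 < k < 2^n\<close>, all fractional parts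
  are nonzero exactly when \<open>k\<close> is odd, and the height of the point is
  \<open>k - (\<lfloor>k/2\<rfloor> + ... + \<lfloor>k/2^n\<rfloor>) = supp\<^sub>2 k\<close> by Legendre's formula. The odd \<open>b < 2^n\<close> are the
  \<open>2r + 1\<close> with \<open>r < 2^(n-1)\<close>, and splitting by parity shows that \<open>z^(supp\<^sub>2 r)\<close> summed over
  \<open>r < 2^m\<close> is \<open>(1 + z)^m\<close>.\<close>

lemma sum_lessThan_double: "(\<Sum>q<2 * N. f q) = (\<Sum>r<N. f (2 * r) + f (Suc (2 * r)))"
  by (induction N) (simp_all add: add.assoc)

lemma sum_add_mult_power2:
  "t + (\<Sum>j<n. a j + t * 2 ^ j) = t * 2 ^ n + (\<Sum>j<n. a j :: 'a :: comm_semiring_1)"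
proof (induction n)
  case (Suc n)
  have "t + (\<Sum>j<Suc n. a j + t * 2 ^ j) = (t + (\<Sum>j<n. a j + t * 2 ^ j)) + (a n + t * 2 ^ n)"
    by (simp add: add.assoc)
  also have "\<dots> = t * 2 ^ Suc n + (\<Sum>j<Suc n. a j)"
    unfolding Suc.IH by (simp add: algebra_simps mult_2)
  finally show ?case .
qed simp

lemma mult_power_divide_power:
  fixes x b :: "'a :: field"
  assumes "b \<noteq> 0" "j \<le> n"
  shows "x * b ^ j / b ^ n = x / b ^ (n - j)"
proof -
  have "b ^ n = b ^ j * b ^ (n - j)"
    using assms(2) by (simp flip: power_add)
  then show ?thesis
    using assms(1) by simp
qed

lemma in_open_unit_interval_iff_div:
  fixes a K M :: int
  assumes "0 < M"
  shows "(0 < a + K / M \<and> a + K / M < (1::real)) \<longleftrightarrow> a = - (K div M) \<and> \<not> M dvd K"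
proof -
  have "a + K / M = (a * M + K) / (M :: real)"
    using assms by (simp add: field_simps)
  then have "(0 < a + K / M \<and> a + K / M < (1::real)) \<longleftrightarrow> 0 < a * M + K \<and> a * M + K < M"
    using assms by (simp add: divide_less_eq zero_less_divide_iff flip: of_int_mult of_int_add)
  also have "\<dots> \<longleftrightarrow> a = - (K div M) \<and> \<not> M dvd K"
  proof
    assume r: "0 < a * M + K \<and> a * M + K < M"
    have "K div M = ((a * M + K) + (- a) * M) div M"
      by simp
    also have "\<dots> = - a + (a * M + K) div M"
      using assms by (intro div_mult_self1) simp
    also have "(a * M + K) div M = 0"
      using r by (intro div_pos_pos_trivial) auto
    finally have "a = - (K div M)"
      by linarith
    moreover have "K mod M = a * M + K"
      using \<open>a = - (K div M)\<close> by (simp add: minus_div_mult_eq_mod [symmetric])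
    ultimately show "a = - (K div M) \<and> \<not> M dvd K"
      using r by (simp add: dvd_eq_mod_eq_0)
  next
    assume a: "a = - (K div M) \<and> \<not> M dvd K"
    then have "a * M + K = K mod M"
      by (simp add: minus_div_mult_eq_mod [symmetric])
    moreover have "K mod M \<noteq> 0"
      using a by (simp add: dvd_eq_mod_eq_0)
    ultimately show "0 < a * M + K \<and> a * M + K < M"
      using assms pos_mod_sign[of M K] pos_mod_bound[of M K] by linarith
  qed
  finally show ?thesis .
qed

lemma supp2_div2: "supp2 k = k mod 2 + supp2 (k div 2)"
  by (subst supp2.simps) (simp add: supp2.simps[of 0])

lemma supp2_double: "supp2 (2 * k) = supp2 k"
  using supp2_div2[of "2 * k"] by simp

lemma supp2_Suc_double: "supp2 (Suc (2 * k)) = Suc (supp2 k)"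
  using supp2_div2[of "Suc (2 * k)"] by simp

lemma supp2_add_sum_div_power2:
  "k < 2 ^ n \<Longrightarrow> supp2 k + (\<Sum>i<n. k div 2 ^ Suc i) = k"
proof (induction n arbitrary: k)
  case 0
  then show ?case by (simp add: supp2.simps)
next
  case (Suc n)
  have "(\<Sum>i<Suc n. k div 2 ^ Suc i) = k div 2 + (\<Sum>i<n. k div 2 div 2 ^ Suc i)"
    by (simp only: sum.lessThan_Suc_shift power_Suc div_mult2_eq) simp
  moreover have "supp2 (k div 2) + (\<Sum>i<n. k div 2 div 2 ^ Suc i) = k div 2"
    using Suc by simp
  ultimately show ?case
    using supp2_div2[of k] div_mult_mod_eq[of k 2] by linarith
qed

lemma supp2_eq_diff_sum_div:
  assumes "k < 2 ^ n"
  shows "int (supp2 k) = int k - (\<Sum>j<n. int (k div 2 ^ (n - j)))"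
proof -
  have "(\<Sum>j<n. k div 2 ^ (n - j)) = (\<Sum>i<n. k div 2 ^ Suc (n - Suc i))"
    by (rule sum.cong) (simp_all add: Suc_diff_Suc)
  also have "\<dots> = (\<Sum>i<n. k div 2 ^ Suc i)"
    by (rule sum.nat_diff_reindex)
  finally show ?thesis
    using supp2_add_sum_div_power2[OF assms] by (simp flip: of_nat_sum)
qed

lemma sum_monom_supp2:
  "(\<Sum>k<2 ^ m. monom (1 :: 'a :: comm_semiring_1) (supp2 k)) = [:1, 1:] ^ m"
proof (induction m)
  case 0
  then show ?case by (simp add: supp2.simps)
next
  case (Suc m)
  have "(\<Sum>k<2 ^ Suc m. monom (1 :: 'a) (supp2 k))
      = (\<Sum>r<2 ^ m. monom 1 (supp2 (2 * r)) + monom 1 (supp2 (Suc (2 * r))))"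
    by (simp add: sum_lessThan_double)
  also have "\<dots> = (\<Sum>r<2 ^ m. [:1, 1:] * monom 1 (supp2 r))"
    by (simp add: supp2_double supp2_Suc_double monom_Suc)
  also have "\<dots> = [:1, 1:] * (\<Sum>r<2 ^ m. monom 1 (supp2 r))"
    by (simp only: sum_distrib_left)
  finally show ?case
    using Suc.IH by simp
qed

lemma sum_monom_supp2_odd:
  "(\<Sum>k | 0 < k \<and> k < 2 ^ Suc m \<and> odd k. monom (1 :: 'a :: comm_semiring_1) (supp2 k))
     = [:0, 1:] * [:1, 1:] ^ m"
proof -
  have "{k. 0 < k \<and> k < 2 ^ Suc m \<and> odd k} = (\<lambda>r. Suc (2 * r)) ` {..<2 ^ m}"
    by (auto simp: image_iff elim!: oddE)
  then have "(\<Sum>k | 0 < k \<and> k < 2 ^ Suc m \<and> odd k. monom (1 :: 'a) (supp2 k))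
      = (\<Sum>r<2 ^ m. [:0, 1:] * monom 1 (supp2 r))"
    by (simp add: sum.reindex inj_on_def supp2_Suc_double monom_Suc)
  also have "\<dots> = [:0, 1:] * [:1, 1:] ^ m"
    by (simp only: sum_distrib_left [symmetric] sum_monom_supp2)
  finally show ?thesis .
qed

lemma sum_B2_vertices:
  assumes "j < n"
  shows "(\<Sum>i\<le>n. l i * real_of_int (B2_vertices i j)) = l (Suc j) - l 0 * 2 ^ j"
proof -
  have "(\<Sum>i\<le>n. l i * real_of_int (B2_vertices i j))
      = l 0 * real_of_int (B2_vertices 0 j) + (\<Sum>i<n. l (Suc i) * real_of_int (B2_vertices (Suc i) j))"
    by (rule sum.atMost_shift)
  also have "(\<Sum>i<n. l (Suc i) * real_of_int (B2_vertices (Suc i) j)) = (\<Sum>i<n. if i = j then l (Suc i) else 0)"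
    by (rule sum.cong) (auto simp: B2_vertices_def)
  finally show ?thesis
    using assms by (simp add: B2_vertices_def)
qed

lemma mem_open_par_lattice_B2_iff:
  "x \<in> open_par_lattice n n B2_vertices \<longleftrightarrow>
     (\<forall>j>n. x j = 0) \<and>
     (\<exists>t::real. 0 < t \<and> t < 1 \<and> (\<forall>j<n. 0 < x j + t * 2 ^ j \<and> x j + t * 2 ^ j < 1) \<and>
        x n = t * 2 ^ n + (\<Sum>j<n. real_of_int (x j)))" (is "_ \<longleftrightarrow> ?rhs")
proof
  assume "x \<in> open_par_lattice n n B2_vertices"
  then obtain l :: "nat \<Rightarrow> real" where x0: "\<forall>j>n. x j = 0" and l01: "\<forall>i\<le>n. 0 < l i \<and> l i < 1"
    and lj: "\<forall>j<n. x j = (\<Sum>i\<le>n. l i * real_of_int (B2_vertices i j))"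
    and ln: "x n = (\<Sum>i\<le>n. l i)"
    unfolding open_par_lattice_def by blast
  have l_Suc: "l (Suc j) = x j + l 0 * 2 ^ j" if "j < n" for j
    using lj sum_B2_vertices[OF that, of l] that by simp
  have "x n = l 0 + (\<Sum>j<n. x j + l 0 * 2 ^ j)"
    unfolding ln sum.atMost_shift by (simp add: l_Suc)
  then have xn: "x n = l 0 * 2 ^ n + (\<Sum>j<n. real_of_int (x j))"
    by (simp only: sum_add_mult_power2)
  have "\<forall>j<n. 0 < x j + l 0 * 2 ^ j \<and> x j + l 0 * 2 ^ j < 1"
    using l01 by (simp flip: l_Suc)
  moreover have "0 < l 0" "l 0 < 1"
    using l01 by simp_all
  ultimately show ?rhs
    using x0 xn by blast
next
  assume ?rhs
  then obtain t :: real where x0: "\<forall>j>n. x j = 0" and t: "0 < t" "t < 1"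
    and xj: "\<forall>j<n. 0 < x j + t * 2 ^ j \<and> x j + t * 2 ^ j < 1"
    and xn: "x n = t * 2 ^ n + (\<Sum>j<n. real_of_int (x j))"
    by blast
  define l where "l i = (if i = 0 then t else x (i - 1) + t * 2 ^ (i - 1))" for i
  have "x n = (\<Sum>i\<le>n. l i)"
  proof -
    have "(\<Sum>i\<le>n. l i) = t + (\<Sum>j<n. x j + t * 2 ^ j)"
      unfolding sum.atMost_shift by (simp add: l_def)
    also have "\<dots> = x n"
      unfolding xn by (rule sum_add_mult_power2)
    finally show ?thesis by simp
  qed
  moreover have "\<forall>i\<le>n. 0 < l i \<and> l i < 1"
    using t xj by (auto simp: l_def)
  moreover have "\<forall>j<n. x j = (\<Sum>i\<le>n. l i * real_of_int (B2_vertices i j))"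
    by (simp add: sum_B2_vertices l_def)
  ultimately show "x \<in> open_par_lattice n n B2_vertices"
    unfolding open_par_lattice_def using x0 by blast
qed

text \<open>The lattice point with \<open>\<lambda>\<^sub>0 = k / 2^n\<close>; its other barycentric coordinates
  \<open>\<lambda>\<^sub>j\<^sub>+\<^sub>1\<close> are the fractional parts of \<open>k / 2^(n - j)\<close>.\<close>
definition B2_point :: "nat \<Rightarrow> nat \<Rightarrow> nat \<Rightarrow> int" where
  "B2_point n k j = (if j < n then - int (k div 2 ^ (n - j)) else if j = n then int (supp2 k) else 0)"

lemma B2_point_in_open_par_lattice:
  assumes "odd k" "k < 2 ^ n"
  shows "B2_point n k \<in> open_par_lattice n n B2_vertices"
  unfolding mem_open_par_lattice_B2_iff
proof (intro conjI exI[of _ "real k / 2 ^ n"])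
  show "\<forall>j>n. B2_point n k j = 0"
    by (simp add: B2_point_def)
  have "real k < 2 ^ n"
    using assms(2) by (metis of_nat_less_iff of_nat_numeral of_nat_power)
  then show "0 < real k / 2 ^ n" "real k / 2 ^ n < 1"
    using odd_pos[OF assms(1)] by simp_all
  show "real_of_int (B2_point n k n) = real k / 2 ^ n * 2 ^ n + (\<Sum>j<n. real_of_int (B2_point n k j))"
    using supp2_eq_diff_sum_div[OF assms(2)] by (simp add: B2_point_def sum_negf)
  show "\<forall>j<n. 0 < B2_point n k j + real k / 2 ^ n * 2 ^ j \<and> B2_point n k j + real k / 2 ^ n * 2 ^ j < 1"
  proof (intro allI impI)
    fix j assume "j < n"
    have "real k / 2 ^ n * 2 ^ j = real_of_int (int k) / real_of_int (2 ^ (n - j))"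
      using \<open>j < n\<close> by (simp add: mult_power_divide_power)
    moreover have "\<not> 2 ^ (n - j) dvd int k"
    proof
      assume "2 ^ (n - j) dvd int k"
      moreover have "(2::int) dvd 2 ^ (n - j)"
        using \<open>j < n\<close> by simp
      ultimately show False
        using assms(1) by (metis dvd_trans even_of_nat)
    qed
    ultimately show "0 < B2_point n k j + real k / 2 ^ n * 2 ^ j \<and> B2_point n k j + real k / 2 ^ n * 2 ^ j < 1"
      using \<open>j < n\<close> in_open_unit_interval_iff_div[of "2 ^ (n - j)" "B2_point n k j" "int k"]
      by (simp add: B2_point_def zdiv_int)
  qed
qed

lemma open_par_lattice_B2_coordinates:
  assumes "x \<in> open_par_lattice n n B2_vertices"
  defines "K \<equiv> x n - (\<Sum>j<n. x j)"
  shows "0 < K" "K < 2 ^ n" "j < n \<Longrightarrow> x j = - (K div 2 ^ (n - j)) \<and> \<not> 2 ^ (n - j) dvd K"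
proof -
  obtain t :: real where t: "0 < t" "t < 1"
    and xj: "\<forall>j<n. 0 < x j + t * 2 ^ j \<and> x j + t * 2 ^ j < 1"
    and xn: "x n = t * 2 ^ n + (\<Sum>j<n. real_of_int (x j))"
    using assms(1) unfolding mem_open_par_lattice_B2_iff by blast
  have tK: "t = real_of_int K / 2 ^ n"
    using xn by (simp add: K_def field_simps)
  have "0 < real_of_int K" "real_of_int K < 2 ^ n"
    using t by (simp_all add: tK divide_less_eq zero_less_divide_iff)
  then show "0 < K" "K < 2 ^ n"
    by (simp, metis of_int_less_iff of_int_numeral of_int_power)
  assume "j < n"
  then have "t * 2 ^ j = real_of_int K / real_of_int (2 ^ (n - j))"
    by (simp add: tK mult_power_divide_power)
  then have "0 < x j + real_of_int K / real_of_int (2 ^ (n - j))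
      \<and> x j + real_of_int K / real_of_int (2 ^ (n - j)) < 1"
    using xj \<open>j < n\<close> by metis
  then show "x j = - (K div 2 ^ (n - j)) \<and> \<not> 2 ^ (n - j) dvd K"
    using in_open_unit_interval_iff_div[of "2 ^ (n - j)" "x j" K] by simp
qed

lemma open_par_lattice_B2E:
  assumes x: "x \<in> open_par_lattice n n B2_vertices"
  obtains k where "odd k" "k < 2 ^ n" "x = B2_point n k"
proof -
  define K where "K = x n - (\<Sum>j<n. x j)"
  note K = open_par_lattice_B2_coordinates[OF x, folded K_def]
  have "n \<noteq> 0"
    using K(1,2) by (cases n) simp_all
  then have "odd K"
    using K(3)[of "n - 1"] by simp
  define k where "k = nat K"
  have K_k: "K = int k"
    using K(1) by (simp add: k_def)
  have "k < 2 ^ n"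
    using K(2) unfolding K_k by (metis of_nat_less_iff of_nat_numeral of_nat_power)
  have "x = B2_point n k"
  proof
    fix j
    consider "j < n" | "j = n" | "j > n" by linarith
    then show "x j = B2_point n k j"
    proof cases
      case 1
      then show ?thesis using K(3) K_k by (simp add: B2_point_def zdiv_int)
    next
      case 2
      have "x n = K + (\<Sum>j<n. x j)" by (simp add: K_def)
      also have "\<dots> = int k - (\<Sum>j<n. int (k div 2 ^ (n - j)))"
        using K(3) K_k by (simp add: zdiv_int sum_negf)
      finally show ?thesis
        using 2 supp2_eq_diff_sum_div[OF \<open>k < 2 ^ n\<close>] by (simp add: B2_point_def)
    next
      case 3
      moreover have "\<forall>j>n. x j = 0"
        using x unfolding open_par_lattice_def by blast
      ultimately show ?thesis by (simp add: B2_point_def)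
    qed
  qed
  then show ?thesis
    using that \<open>odd K\<close> K_k \<open>k < 2 ^ n\<close> by simp
qed

lemma inj_on_B2_point: "inj_on (B2_point n) {..<2 ^ n}"
proof (rule inj_on_inverseI)
  fix k :: nat assume "k \<in> {..<2 ^ n}"
  then show "nat (B2_point n k n - (\<Sum>j<n. B2_point n k j)) = k"
    using supp2_eq_diff_sum_div[of k n] by (simp add: B2_point_def sum_negf)
qed

lemma open_par_lattice_B2:
  "open_par_lattice n n B2_vertices = B2_point n ` {k. 0 < k \<and> k < 2 ^ n \<and> odd k}"
proof (intro equalityI subsetI)
  fix x assume x: "x \<in> open_par_lattice n n B2_vertices"
  obtain k where "odd k" "k < 2 ^ n" "x = B2_point n k"
    by (rule open_par_lattice_B2E[OF x])
  then show "x \<in> B2_point n ` {k. 0 < k \<and> k < 2 ^ n \<and> odd k}"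
    using odd_pos by blast
next
  fix x assume "x \<in> B2_point n ` {k. 0 < k \<and> k < 2 ^ n \<and> odd k}"
  then show "x \<in> open_par_lattice n n B2_vertices"
    using B2_point_in_open_par_lattice by blast
qed

lemma lstar_B2: "lstar n n B2_vertices = (\<Sum>k | 0 < k \<and> k < 2 ^ n \<and> odd k. monom 1 (supp2 k))"
proof -
  have "inj_on (B2_point n) {k. 0 < k \<and> k < 2 ^ n \<and> odd k}"
    by (rule inj_on_subset[OF inj_on_B2_point]) auto
  then show ?thesis
    unfolding lstar_def open_par_lattice_B2 by (simp add: sum.reindex B2_point_def)
qed

theorem mainTheorem10:
  fixes n :: nat
  assumes "n \<ge> 1"
  shows "lstar n n B2_vertices = [:0, 1:] * [:1, 1:] ^ (n - 1)
       \<and> [:0, 1:] * [:1, 1:] ^ (n - 1) = (\<Sum>b\<in>{b::nat. 0 < b \<and> b < 2 ^ n \<and> odd b}. monom 1 (supp2 b))"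
proof -
  obtain m where n: "n = Suc m"
    using assms by (cases n) auto
  have "lstar n n B2_vertices = [:0, 1:] * [:1, 1:] ^ (n - 1)"
    using lstar_B2[of n] sum_monom_supp2_odd[of m] by (simp add: n)
  then show ?thesis
    using sum_monom_supp2_odd[of m, symmetric] by (simp add: n)
qed

end
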